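(* If $(A,S)$ is an arbitrary QP and $(C,T)$ is a trivial QP (on the same vertex set), then the canonical embedding $R\langle\langle A\rangle\rangle\to R\langle\langle A\oplus C\rangle\rangle$ induces an isomorphism of Jacobian algebras $\mathcal P(A,S)\to\mathcal P(A\oplus C,S+T)$.
   Context: Fix a field $K$; quiver with vertex set $Q_0$, $R=K^{Q_0}$, arrow span $A$ (an $R$-bimodule, $A_{i,j}=e_iAe_j$ spanned by arrows from $j$ to $i$). $R\langle\langle A\rangle\rangle=\prod_{d\ge0}A^d$ is the complete path algebra (possibly infinite linear combinations of paths) with the $\mathfrak m$-adic topology, $\mathfrak m=\prod_{d\ge1}A^d$. A potential is a possibly infinite linear combination of cyclic paths; cyclic equivalence: difference lies in the closure of the span of $a_1\cdots a_d-a_2\cdots a_da_1$. For $\xi\in A^\star$, $\partial_\xi(a_1\cdots a_d)=\sum_k\xi(a_k)a_{k+1}\cdots a_da_1\cdots a_{k-1}$. $J(S)$ is the closure of the two-sided ideal generated by all $\partial_\xi S$; $\mathcal P(A,S)=R\langle\langle A\rangle\rangle/J(S)$. A QP $(A,S)$: no loops ($A_{i,i}=0$) and no two cyclically equivalent cyclic paths in $S$. $(A,S)\oplus(C,T)=(A\oplus C,S+T)$, with $R\langle\langle A\rangle\rangle$ and $R\langle\langle C\rangle\rangle$ embedded as closed subalgebras of $R\langle\langle A\oplus C\rangle\rangle$. A QP $(C,T)$ is trivial if $T\in C^2$ and $\{\partial_\xi T:\xi\in C^\star\}=C$. *)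

theory Defs
  imports Main
begin

text \<open>An arrow a with src a = j and tgt a = i lies in A_{i,j} = e_i A e_j (an arrow from j to i).\<close>

record ('v, 'a) quiver =
  verts :: "'v set"
  arrs :: "'a set"
  src :: "'a \<Rightarrow> 'v"
  tgt :: "'a \<Rightarrow> 'v"

definition wf_quiver :: "('v, 'a) quiver \<Rightarrow> bool" where
  "wf_quiver Q \<longleftrightarrow> finite (verts Q) \<and> finite (arrs Q) \<and>
     (\<forall>a \<in> arrs Q. src Q a \<in> verts Q \<and> tgt Q a \<in> verts Q)"

definition composable :: "('v, 'a) quiver \<Rightarrow> 'a list \<Rightarrow> bool" where
  "composable Q w \<longleftrightarrow> (\<forall>k. Suc k < length w \<longrightarrow> src Q (w ! k) = tgt Q (w ! Suc k))"

text \<open>A path is a pair (i, w): for w = [] it is the idempotent e_i; for w nonempty it is the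
  path a1 ... ad, and i is then its target vertex tgt a1 (so the representation is unique).\<close>

definition valid_path :: "('v, 'a) quiver \<Rightarrow> 'v \<times> 'a list \<Rightarrow> bool" where
  "valid_path Q p \<longleftrightarrow> fst p \<in> verts Q \<and> set (snd p) \<subseteq> arrs Q \<and> composable Q (snd p) \<and>
     (snd p \<noteq> [] \<longrightarrow> fst p = tgt Q (hd (snd p)))"

definition at_path :: "('v, 'a) quiver \<Rightarrow> 'v \<Rightarrow> 'a list \<Rightarrow> 'v \<times> 'a list" where
  "at_path Q v w = (if w = [] then v else tgt Q (hd w), w)"

definition src_vertex :: "('v, 'a) quiver \<Rightarrow> 'v \<times> 'a list \<Rightarrow> 'v" where
  "src_vertex Q p = (if snd p = [] then fst p else src Q (last (snd p)))"

text \<open>The complete path algebra R<<A>>: arbitrary (possibly infinite) K-linear combinations of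
  paths, i.e. coefficient functions supported on valid paths.\<close>

definition palg :: "('v, 'a) quiver \<Rightarrow> ('v \<times> 'a list \<Rightarrow> 'k::field) set" where
  "palg Q = {f. \<forall>p. \<not> valid_path Q p \<longrightarrow> f p = 0}"

definition pmult :: "('v, 'a) quiver \<Rightarrow> ('v \<times> 'a list \<Rightarrow> 'k::field) \<Rightarrow> ('v \<times> 'a list \<Rightarrow> 'k)
    \<Rightarrow> ('v \<times> 'a list \<Rightarrow> 'k)" where
  "pmult Q f g p = (if valid_path Q p then
      (\<Sum>k \<in> {0..length (snd p)}.
         f (at_path Q (fst p) (take k (snd p))) * g (at_path Q (src_vertex Q p) (drop k (snd p))))
    else 0)"

definition pone :: "('v, 'a) quiver \<Rightarrow> ('v \<times> 'a list \<Rightarrow> 'k::field)" where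
  "pone Q p = (if fst p \<in> verts Q \<and> snd p = [] then 1 else 0)"

text \<open>The m-adic closure: f is in the closure of X iff for every d some g in X agrees with f
  modulo m^(d+1), i.e. on all paths of length at most d.\<close>

definition madic_closure :: "('v, 'a) quiver \<Rightarrow> ('v \<times> 'a list \<Rightarrow> 'k::field) set
    \<Rightarrow> ('v \<times> 'a list \<Rightarrow> 'k) set" where
  "madic_closure Q X = {f \<in> palg Q. \<forall>d. \<exists>g \<in> X.
      \<forall>p. valid_path Q p \<and> length (snd p) \<le> d \<longrightarrow> f p = g p}"

inductive_set ideal_gen :: "('v, 'a) quiver \<Rightarrow> ('v \<times> 'a list \<Rightarrow> 'k::field) set
    \<Rightarrow> ('v \<times> 'a list \<Rightarrow> 'k) set"
  for Q G where
  zero: "(\<lambda>p. 0) \<in> ideal_gen Q G"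
| gen: "g \<in> G \<Longrightarrow> u \<in> palg Q \<Longrightarrow> v \<in> palg Q \<Longrightarrow> pmult Q (pmult Q u g) v \<in> ideal_gen Q G"
| add: "x \<in> ideal_gen Q G \<Longrightarrow> y \<in> ideal_gen Q G \<Longrightarrow> (\<lambda>p. x p + y p) \<in> ideal_gen Q G"

definition cyclic_word :: "('v, 'a) quiver \<Rightarrow> 'a list \<Rightarrow> bool" where
  "cyclic_word Q w \<longleftrightarrow> w \<noteq> [] \<and> set w \<subseteq> arrs Q \<and> composable Q w \<and> tgt Q (hd w) = src Q (last w)"

definition potential :: "('v, 'a) quiver \<Rightarrow> ('v \<times> 'a list \<Rightarrow> 'k::field) \<Rightarrow> bool" where
  "potential Q S \<longleftrightarrow> S \<in> palg Q \<and> (\<forall>p. S p \<noteq> 0 \<longrightarrow> cyclic_word Q (snd p))"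

text \<open>Cyclic derivative with respect to xi in A^*, xi given by its values on the arrow basis:
  d_xi(a1...ad) = sum_k xi(a_k) a_(k+1)...a_d a_1...a_(k-1), extended continuously.
  The coefficient of the path (i,w) collects all cycles c = drop j w @ [a] @ take j w.\<close>

definition cyc_deriv :: "('v, 'a) quiver \<Rightarrow> ('a \<Rightarrow> 'k::field) \<Rightarrow> ('v \<times> 'a list \<Rightarrow> 'k)
    \<Rightarrow> ('v \<times> 'a list \<Rightarrow> 'k)" where
  "cyc_deriv Q \<xi> S p = (if valid_path Q p then
      (\<Sum>j \<in> {0..length (snd p)}. \<Sum>a \<in> arrs Q.
         (if snd p = [] \<and> tgt Q a \<noteq> fst p then 0
          else \<xi> a * S (at_path Q (fst p) (drop j (snd p) @ [a] @ take j (snd p)))))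
    else 0)"

definition jacobian_ideal :: "('v, 'a) quiver \<Rightarrow> ('v \<times> 'a list \<Rightarrow> 'k::field)
    \<Rightarrow> ('v \<times> 'a list \<Rightarrow> 'k) set" where
  "jacobian_ideal Q S = madic_closure Q (ideal_gen Q {cyc_deriv Q \<xi> S | \<xi>. True})"

definition is_QP :: "('v, 'a) quiver \<Rightarrow> ('v \<times> 'a list \<Rightarrow> 'k::field) \<Rightarrow> bool" where
  "is_QP Q S \<longleftrightarrow> wf_quiver Q \<and> (\<forall>a \<in> arrs Q. src Q a \<noteq> tgt Q a) \<and> potential Q S \<and>
     (\<forall>p q. p \<noteq> q \<and> (\<exists>n. snd q = rotate n (snd p)) \<longrightarrow> S p = 0 \<or> S q = 0)"

definition homog :: "('v, 'a) quiver \<Rightarrow> nat \<Rightarrow> ('v \<times> 'a list \<Rightarrow> 'k::field) set" where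
  "homog Q d = {f \<in> palg Q. \<forall>p. f p \<noteq> 0 \<longrightarrow> length (snd p) = d}"

definition trivial_QP :: "('v, 'a) quiver \<Rightarrow> ('v \<times> 'a list \<Rightarrow> 'k::field) \<Rightarrow> bool" where
  "trivial_QP Q T \<longleftrightarrow> is_QP Q T \<and> T \<in> homog Q 2 \<and>
     {cyc_deriv Q \<xi> T | \<xi>. True} = homog Q 1"

text \<open>Direct sum of the arrow spans over the same vertex set: disjoint union of arrows.\<close>
definition qsum :: "('v, 'a) quiver \<Rightarrow> ('v, 'c) quiver \<Rightarrow> ('v, 'a + 'c) quiver" where
  "qsum QA QC = \<lparr> verts = verts QA, arrs = Inl ` arrs QA \<union> Inr ` arrs QC,
      src = case_sum (src QA) (src QC), tgt = case_sum (tgt QA) (tgt QC) \<rparr>"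

definition emb_l :: "('v \<times> 'a list \<Rightarrow> 'k::field) \<Rightarrow> ('v \<times> ('a + 'c) list \<Rightarrow> 'k)" where
  "emb_l f p = (if set (snd p) \<subseteq> range Inl then f (fst p, map projl (snd p)) else 0)"

definition emb_r :: "('v \<times> 'c list \<Rightarrow> 'k::field) \<Rightarrow> ('v \<times> ('a + 'c) list \<Rightarrow> 'k)" where
  "emb_r f p = (if set (snd p) \<subseteq> range Inr then f (fst p, map projr (snd p)) else 0)"

end

theory Submission
  imports Defs "HOL-Library.Indicator_Function"
begin

text \<open>
  The derivatives of \<open>S + T\<close> along arrows of \<open>A\<close> are the images of the derivatives of \<open>S\<close>,
  while those along arrows of \<open>C\<close> are the derivatives of \<open>T\<close>, which by triviality of \<open>(C, T)\<close>
  include every single arrow of \<open>C\<close>. Hence every path through an arrow of \<open>C\<close> lies in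
  \<open>J(S + T)\<close>, so modulo \<open>J(S + T)\<close> every element is congruent to its restriction to the
  paths in \<open>A\<close> (surjectivity). This restriction is a continuous multiplicative left inverse of
  the embedding; it kills the derivatives of \<open>T\<close>, which have degree 1 as \<open>T\<close> is quadratic,
  so it maps \<open>J(S + T)\<close> into \<open>J(S)\<close> (injectivity).
\<close>

lemma qsum_simps [simp]:
  "verts (qsum QA QC) = verts QA"
  "arrs (qsum QA QC) = Inl ` arrs QA \<union> Inr ` arrs QC"
  "src (qsum QA QC) (Inl a) = src QA a" "src (qsum QA QC) (Inr c) = src QC c"
  "tgt (qsum QA QC) (Inl a) = tgt QA a" "tgt (qsum QA QC) (Inr c) = tgt QC c"
  by (simp_all add: qsum_def)

lemma wf_quiver_qsum:
  "wf_quiver QA \<Longrightarrow> wf_quiver QC \<Longrightarrow> verts QC = verts QA \<Longrightarrow> wf_quiver (qsum QA QC)"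
  by (auto simp: wf_quiver_def)

lemma valid_path_map_Inl [simp]:
  "valid_path (qsum QA QC) (v, map Inl w) \<longleftrightarrow> valid_path QA (v, w)"
  by (auto simp: valid_path_def composable_def hd_map)

lemma valid_path_map_Inr [simp]:
  "verts QC = verts QA \<Longrightarrow> valid_path (qsum QA QC) (v, map Inr w) \<longleftrightarrow> valid_path QC (v, w)"
  by (auto simp: valid_path_def composable_def hd_map)

lemma subset_range_Inl_iff: "set w \<subseteq> range Inl \<longleftrightarrow> (\<exists>u. w = map Inl u)"
  by (induction w) (auto simp: Cons_eq_map_conv)

lemma subset_range_Inr_iff: "set w \<subseteq> range Inr \<longleftrightarrow> (\<exists>u. w = map Inr u)"
  by (induction w) (auto simp: Cons_eq_map_conv)

lemma snd_at_path [simp]: "snd (at_path Q v u) = u"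
  by (simp add: at_path_def)

lemma at_path_map_Inl:
  "at_path (qsum QA QC) v (map Inl u) = (fst (at_path QA v u), map Inl u)"
  by (cases u) (simp_all add: at_path_def)

lemma src_vertex_map_Inl [simp]:
  "src_vertex (qsum QA QC) (v, map Inl w) = src_vertex QA (v, w)"
  by (simp add: src_vertex_def last_map)

lemma emb_l_map_Inl [simp]: "emb_l f (v, map Inl w) = f (v, w)"
  by (simp add: emb_l_def image_subset_iff comp_def)

lemma emb_r_map_Inr [simp]: "emb_r f (v, map Inr w) = f (v, w)"
  by (simp add: emb_r_def image_subset_iff comp_def)

lemma emb_l_eq_0: "\<not> set (snd p) \<subseteq> range Inl \<Longrightarrow> emb_l f p = 0"
  by (simp add: emb_l_def)

lemma emb_r_eq_0: "\<not> set (snd p) \<subseteq> range Inr \<Longrightarrow> emb_r f p = 0"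
  by (simp add: emb_r_def)

lemma emb_l_zero [simp]: "emb_l (\<lambda>_. 0) = (\<lambda>_. 0)"
  by (simp add: emb_l_def fun_eq_iff)

lemma emb_r_zero [simp]: "emb_r (\<lambda>_. 0) = (\<lambda>_. 0)"
  by (simp add: emb_r_def fun_eq_iff)

lemma emb_l_at_path_map_Inl [simp]:
  "emb_l f (at_path (qsum QA QC) v (map Inl u)) = f (at_path QA v u)"
  by (cases u) (simp_all add: at_path_def emb_l_def image_subset_iff comp_def)

lemma emb_r_at_path_map_Inr [simp]:
  "emb_r f (at_path (qsum QA QC) v (map Inr u)) = f (at_path QC v u)"
  by (cases u) (simp_all add: at_path_def emb_r_def image_subset_iff comp_def)

lemma emb_l_palg: "x \<in> palg QA \<Longrightarrow> emb_l x \<in> palg (qsum QA QC)"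
  by (auto simp: palg_def emb_l_def subset_range_Inl_iff comp_def)

lemma emb_l_pone: "emb_l (pone QA) = pone (qsum QA QC)"
  by (auto simp: fun_eq_iff emb_l_def pone_def)

lemma emb_l_add: "emb_l (\<lambda>p. x p + y p) = (\<lambda>p. emb_l x p + emb_l y p)"
  by (simp add: emb_l_def fun_eq_iff)

lemma emb_l_smult: "emb_l (\<lambda>p. c * x p) = (\<lambda>p. c * emb_l x p)"
  by (simp add: emb_l_def fun_eq_iff)

lemma emb_l_pmult:
  fixes QA :: "('v, 'a) quiver" and QC :: "('v, 'c) quiver"
  shows "emb_l (pmult QA x y) = pmult (qsum QA QC) (emb_l x) (emb_l y)"
proof
  fix p :: "'v \<times> ('a + 'c) list"
  obtain v w where p: "p = (v, w)" by fastforce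
  show "emb_l (pmult QA x y) p = pmult (qsum QA QC) (emb_l x) (emb_l y) p"
  proof (cases "set w \<subseteq> range Inl")
    case True
    then obtain u where "w = map Inl u" by (auto simp: subset_range_Inl_iff)
    then show ?thesis by (simp add: p pmult_def take_map drop_map)
  next
    case False
    then have "emb_l x (at_path Q v (take k w)) * emb_l y (at_path Q u (drop k w)) = 0" for Q u k
      by (metis append_take_drop_id set_append Un_subset_iff emb_l_eq_0 snd_at_path
          mult_zero_left mult_zero_right)
    then show ?thesis using False by (simp add: p pmult_def emb_l_eq_0 del: mult_eq_0_iff)
  qed
qed

definition proj_l :: "('v \<times> ('a + 'c) list \<Rightarrow> 'k::field) \<Rightarrow> ('v \<times> 'a list \<Rightarrow> 'k)" where
  "proj_l f p = f (fst p, map Inl (snd p))"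

lemma proj_l_emb_l [simp]: "proj_l (emb_l x) = x"
  by (simp add: proj_l_def fun_eq_iff)

lemma proj_l_palg: "f \<in> palg (qsum QA QC) \<Longrightarrow> proj_l f \<in> palg QA"
  by (auto simp: palg_def proj_l_def)

lemma proj_l_add: "proj_l (\<lambda>p. x p + y p) = (\<lambda>p. proj_l x p + proj_l y p)"
  by (simp add: proj_l_def fun_eq_iff)

lemma proj_l_pmult: "proj_l (pmult (qsum QA QC) f g) = pmult QA (proj_l f) (proj_l g)"
  by (auto simp: fun_eq_iff pmult_def proj_l_def take_map drop_map at_path_map_Inl)

lemma proj_l_emb_r:
  assumes "\<And>v. f (v, []) = 0"
  shows "proj_l (emb_r f) = (\<lambda>_. 0)"
proof
  fix p
  show "proj_l (emb_r f) p = 0"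
    using assms by (cases "snd p") (auto simp: proj_l_def emb_r_def)
qed

lemma emb_l_proj_l: "set (snd p) \<subseteq> range Inl \<Longrightarrow> emb_l (proj_l f) p = f p"
  by (cases p) (auto simp: proj_l_def subset_range_Inl_iff)

section \<open>Continuous homomorphisms preserve Jacobian ideals\<close>

text \<open>The last clause says that congruence modulo m^(d+1) is preserved, i.e. \<open>h\<close> is
  continuous for the m-adic topology.\<close>

definition continuous_palg_hom ::
  "('v, 'a) quiver \<Rightarrow> ('v, 'b) quiver \<Rightarrow>
    (('v \<times> 'a list \<Rightarrow> 'k::field) \<Rightarrow> ('v \<times> 'b list \<Rightarrow> 'k)) \<Rightarrow> bool"
where
  "continuous_palg_hom Q Q' h \<longleftrightarrow>
     (\<forall>u \<in> palg Q. h u \<in> palg Q') \<and>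
     (\<forall>x y. h (\<lambda>p. x p + y p) = (\<lambda>p. h x p + h y p)) \<and>
     (\<forall>u v. h (pmult Q u v) = pmult Q' (h u) (h v)) \<and>
     (\<forall>d f g. (\<forall>p. valid_path Q p \<and> length (snd p) \<le> d \<longrightarrow> f p = g p) \<longrightarrow>
        (\<forall>p. valid_path Q' p \<and> length (snd p) \<le> d \<longrightarrow> h f p = h g p))"

lemma continuous_palg_hom_emb_l:
  fixes QA :: "('v, 'a) quiver" and QC :: "('v, 'c) quiver"
  shows "continuous_palg_hom QA (qsum QA QC) (emb_l :: ('v \<times> 'a list \<Rightarrow> 'k::field) \<Rightarrow> _)"
  unfolding continuous_palg_hom_def
proof (intro conjI allI ballI impI)
  fix d and f g :: "'v \<times> 'a list \<Rightarrow> 'k" and p :: "'v \<times> ('a + 'c) list"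
  assume agree: "\<forall>p. valid_path QA p \<and> length (snd p) \<le> d \<longrightarrow> f p = g p"
    and p: "valid_path (qsum QA QC) p \<and> length (snd p) \<le> d"
  show "emb_l f p = emb_l g p"
  proof (cases "set (snd p) \<subseteq> range Inl")
    case True
    then obtain u where "p = (fst p, map Inl u)" by (metis prod.collapse subset_range_Inl_iff)
    then show ?thesis using agree p by (metis emb_l_map_Inl length_map snd_conv valid_path_map_Inl)
  qed (simp add: emb_l_eq_0)
qed (simp_all add: emb_l_palg emb_l_add emb_l_pmult)

lemma continuous_palg_hom_proj_l:
  fixes QA :: "('v, 'a) quiver" and QC :: "('v, 'c) quiver"
  shows "continuous_palg_hom (qsum QA QC) QA (proj_l :: ('v \<times> ('a + 'c) list \<Rightarrow> 'k::field) \<Rightarrow> _)"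
  unfolding continuous_palg_hom_def
proof (intro conjI allI ballI impI)
  fix d and f g :: "'v \<times> ('a + 'c) list \<Rightarrow> 'k" and p :: "'v \<times> 'a list"
  assume "\<forall>p. valid_path (qsum QA QC) p \<and> length (snd p) \<le> d \<longrightarrow> f p = g p"
    and "valid_path QA p \<and> length (snd p) \<le> d"
  then show "proj_l f p = proj_l g p"
    by (cases p) (simp add: proj_l_def)
qed (simp_all add: proj_l_palg proj_l_pmult proj_l_def fun_eq_iff)

lemma continuous_palg_hom_zero:
  assumes "continuous_palg_hom Q Q' h"
  shows "h (\<lambda>_. 0) = (\<lambda>_. 0)"
proof
  fix p
  have "h (\<lambda>p. x p + y p) = (\<lambda>p. h x p + h y p)" for x y
    using assms by (simp add: continuous_palg_hom_def)
  from fun_cong[OF this[of "\<lambda>_. 0" "\<lambda>_. 0"], of p]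
  have "h (\<lambda>_. 0) p = h (\<lambda>_. 0) p + h (\<lambda>_. 0) p"
    by (simp only: add_0_left)
  then show "h (\<lambda>_. 0) p = 0"
    by (simp only: add_cancel_right_right)
qed

lemma ideal_gen_image:
  assumes h: "continuous_palg_hom Q Q' h" and gens: "h ` G \<subseteq> G'"
  shows "h ` ideal_gen Q G \<subseteq> ideal_gen Q' G'"
proof clarify
  fix x assume "x \<in> ideal_gen Q G"
  then show "h x \<in> ideal_gen Q' G'"
  proof (induction rule: ideal_gen.induct)
    case zero
    then show ?case by (simp add: continuous_palg_hom_zero[OF h] ideal_gen.zero)
  next
    case (gen g u v)
    have "h (pmult Q (pmult Q u g) v) = pmult Q' (pmult Q' (h u) (h g)) (h v)"
      using h by (simp add: continuous_palg_hom_def)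
    moreover have "h g \<in> G'" "h u \<in> palg Q'" "h v \<in> palg Q'"
      using gen h gens by (auto simp: continuous_palg_hom_def)
    ultimately show ?case by (simp add: ideal_gen.gen)
  next
    case (add x y)
    then show ?case
      using h by (simp add: continuous_palg_hom_def ideal_gen.add)
  qed
qed

lemma madic_closure_image:
  assumes h: "continuous_palg_hom Q Q' h" and "h ` X \<subseteq> Y"
  shows "h ` madic_closure Q X \<subseteq> madic_closure Q' Y"
proof clarify
  fix f assume f: "f \<in> madic_closure Q X"
  show "h f \<in> madic_closure Q' Y"
    unfolding madic_closure_def
  proof (intro CollectI conjI allI)
    show "h f \<in> palg Q'"
      using f h by (simp add: madic_closure_def continuous_palg_hom_def)
    fix d
    obtain g where "g \<in> X" "\<forall>p. valid_path Q p \<and> length (snd p) \<le> d \<longrightarrow> f p = g p"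
      using f unfolding madic_closure_def by blast
    moreover have "\<And>d f g. \<forall>p. valid_path Q p \<and> length (snd p) \<le> d \<longrightarrow> f p = g p \<Longrightarrow>
        \<forall>p. valid_path Q' p \<and> length (snd p) \<le> d \<longrightarrow> h f p = h g p"
      using h unfolding continuous_palg_hom_def by blast
    ultimately show "\<exists>g' \<in> Y. \<forall>p. valid_path Q' p \<and> length (snd p) \<le> d \<longrightarrow> h f p = g' p"
      using assms(2) by blast
  qed
qed

lemma jacobian_ideal_image:
  assumes h: "continuous_palg_hom Q Q' h"
    and gens: "\<And>\<xi>. \<exists>\<xi>'. h (cyc_deriv Q \<xi> S) = cyc_deriv Q' \<xi>' S'"
  shows "h ` jacobian_ideal Q S \<subseteq> jacobian_ideal Q' S'"
proof -
  have "h ` {cyc_deriv Q \<xi> S | \<xi>. True} \<subseteq> {cyc_deriv Q' \<xi> S' | \<xi>. True}"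
    using gens by fastforce
  then show ?thesis
    unfolding jacobian_ideal_def by (intro madic_closure_image ideal_gen_image h)
qed

lemma cyc_deriv_add:
  "cyc_deriv Q \<xi> (\<lambda>p. f p + g p) = (\<lambda>p. cyc_deriv Q \<xi> f p + cyc_deriv Q \<xi> g p)"
  by (auto simp: fun_eq_iff cyc_deriv_def distrib_left sum.distrib[symmetric] intro!: sum.cong)

lemma cyc_deriv_zero_left: "cyc_deriv Q (\<lambda>_. 0) f = (\<lambda>_. 0)"
  by (auto simp: fun_eq_iff cyc_deriv_def intro!: sum.neutral)

lemma set_rotate_insert: "set (drop j w @ a # take j w) = insert a (set w)"
  by (metis Un_commute Un_insert_left append_take_drop_id set_append set_simps(2))

lemma sum_qsum_arrs:
  assumes "finite (arrs QA)" "finite (arrs QC)"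
  shows "(\<Sum>a \<in> Inl ` arrs QA \<union> Inr ` arrs QC. f a)
    = (\<Sum>a \<in> arrs QA. f (Inl a)) + (\<Sum>c \<in> arrs QC. f (Inr c))"
proof -
  have "(\<Sum>a \<in> Inl ` arrs QA \<union> Inr ` arrs QC. f a)
      = (\<Sum>a \<in> Inl ` arrs QA. f a) + (\<Sum>a \<in> Inr ` arrs QC. f a)"
    using assms by (intro sum.union_disjoint) auto
  then show ?thesis
    by (simp add: sum.reindex)
qed

lemma emb_l_at_path_Inl_middle:
  "emb_l f (at_path (qsum QA QC) v (map Inl x @ Inl a # map Inl y)) = f (at_path QA v (x @ a # y))"
  by (metis emb_l_at_path_map_Inl list.simps(9) map_append)

lemma emb_l_at_path_Inr_middle: "emb_l f (at_path Q v (x @ Inr c # y)) = 0"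
  by (rule emb_l_eq_0) auto

lemma cyc_deriv_emb_l:
  fixes QA :: "('v, 'a) quiver" and QC :: "('v, 'c) quiver" and f :: "'v \<times> 'a list \<Rightarrow> 'k::field"
  assumes "finite (arrs QA)" "finite (arrs QC)"
  shows "cyc_deriv (qsum QA QC) \<xi> (emb_l f) = emb_l (cyc_deriv QA (\<xi> \<circ> Inl) f)"
proof
  fix p :: "'v \<times> ('a + 'c) list"
  obtain v w where p: "p = (v, w)" by fastforce
  show "cyc_deriv (qsum QA QC) \<xi> (emb_l f) p = emb_l (cyc_deriv QA (\<xi> \<circ> Inl) f) p"
  proof (cases "set w \<subseteq> range Inl")
    case True
    then obtain u where w: "w = map Inl u" by (auto simp: subset_range_Inl_iff)
    show ?thesis
      using assms by (simp add: p w cyc_deriv_def sum_qsum_arrs drop_map take_map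
          emb_l_at_path_Inl_middle emb_l_at_path_Inr_middle cong: if_cong)
  next
    case False
    then have "emb_l f (at_path (qsum QA QC) v (drop j w @ [a] @ take j w)) = 0" for j a
      by (intro emb_l_eq_0) (simp only: snd_at_path append.simps set_rotate_insert, auto)
    then show ?thesis
      using False by (simp add: p cyc_deriv_def emb_l_eq_0 cong: if_cong)
  qed
qed

lemma emb_r_at_path_Inr_middle:
  "emb_r f (at_path (qsum QA QC) v (map Inr x @ Inr c # map Inr y)) = f (at_path QC v (x @ c # y))"
  by (metis emb_r_at_path_map_Inr list.simps(9) map_append)

lemma emb_r_at_path_Inl_middle: "emb_r f (at_path Q v (x @ Inl a # y)) = 0"
  by (rule emb_r_eq_0) auto

lemma cyc_deriv_emb_r:
  fixes QA :: "('v, 'a) quiver" and QC :: "('v, 'c) quiver" and f :: "'v \<times> 'c list \<Rightarrow> 'k::field"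
  assumes "finite (arrs QA)" "finite (arrs QC)" and "verts QC = verts QA"
  shows "cyc_deriv (qsum QA QC) \<xi> (emb_r f) = emb_r (cyc_deriv QC (\<xi> \<circ> Inr) f)"
proof
  fix p :: "'v \<times> ('a + 'c) list"
  obtain v w where p: "p = (v, w)" by fastforce
  show "cyc_deriv (qsum QA QC) \<xi> (emb_r f) p = emb_r (cyc_deriv QC (\<xi> \<circ> Inr) f) p"
  proof (cases "set w \<subseteq> range Inr")
    case True
    then obtain u where w: "w = map Inr u" by (auto simp: subset_range_Inr_iff)
    show ?thesis
      using assms by (simp add: p w cyc_deriv_def sum_qsum_arrs drop_map take_map
          emb_r_at_path_Inr_middle emb_r_at_path_Inl_middle cong: if_cong)
  next
    case False
    then have "emb_r f (at_path (qsum QA QC) v (drop j w @ [a] @ take j w)) = 0" for j a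
      by (intro emb_r_eq_0) (simp only: snd_at_path append.simps set_rotate_insert, auto)
    then show ?thesis
      using False by (simp add: p cyc_deriv_def emb_r_eq_0 cong: if_cong)
  qed
qed

lemma cyc_deriv_qsum_potential:
  assumes "finite (arrs QA)" "finite (arrs QC)" "verts QC = verts QA"
  shows "cyc_deriv (qsum QA QC) \<xi> (\<lambda>p. emb_l S p + emb_r T p)
    = (\<lambda>p. emb_l (cyc_deriv QA (\<xi> \<circ> Inl) S) p + emb_r (cyc_deriv QC (\<xi> \<circ> Inr) T) p)"
  using assms by (simp add: cyc_deriv_add cyc_deriv_emb_l cyc_deriv_emb_r)

lemma cyc_deriv_Nil_eq_0:
  assumes "T \<in> homog Q 2"
  shows "cyc_deriv Q \<xi> T (v, []) = 0"
proof -
  have "T (u, [a]) = 0" for u a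
    using assms by (force simp: homog_def)
  then show ?thesis
    by (simp add: cyc_deriv_def at_path_def cong: if_cong)
qed

section \<open>Paths through a generating arrow\<close>

lemma composable_append_left: "composable Q (x @ y) \<Longrightarrow> composable Q x"
  unfolding composable_def by (metis Suc_lessD length_append nth_append trans_less_add1)

lemma valid_path_append_left: "valid_path Q (v, x @ y) \<Longrightarrow> valid_path Q (v, x)"
  by (auto simp: valid_path_def dest: composable_append_left)

lemma valid_path_append_right:
  assumes "wf_quiver Q" and "valid_path Q (v, x @ y)"
  shows "valid_path Q (at_path Q (src_vertex Q (v, x)) y)"
proof (cases y)
  case Nil
  have "src_vertex Q (v, x) \<in> verts Q"
  proof (cases "x = []")
    case True
    then show ?thesis using assms(2) by (simp add: src_vertex_def valid_path_def)
  next
    case False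
    then have "last x \<in> arrs Q" using assms(2) by (auto simp: valid_path_def)
    then show ?thesis using False assms(1) by (simp add: src_vertex_def wf_quiver_def)
  qed
  then show ?thesis
    by (simp add: Nil at_path_def valid_path_def composable_def)
next
  case (Cons a y')
  then show ?thesis
    using assms by (auto simp: at_path_def valid_path_def wf_quiver_def composable_def nth_append
        dest: spec[of _ "length x + _"])
qed

lemma at_path_take: "valid_path Q (u, z) \<Longrightarrow> at_path Q u (take j z) = (u, take j z)"
  by (cases z) (auto simp: at_path_def valid_path_def)

lemma at_path_src_vertex_drop:
  "at_path Q (src_vertex Q (u, z)) (drop j z) = at_path Q (src_vertex Q (u, take j z)) (drop j z)"
  by (cases "j < length z") (auto simp: at_path_def)

lemma pmult_indicator_append:
  fixes Q :: "('v, 'a) quiver"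
  assumes "valid_path Q (v, x @ y)"
  shows "pmult Q (indicator {(v, x)}) (indicator {at_path Q (src_vertex Q (v, x)) y})
    = (indicator {(v, x @ y)} :: _ \<Rightarrow> 'k::field)"
proof
  fix r :: "'v \<times> 'a list"
  obtain u z where r: "r = (u, z)" by fastforce
  show "pmult Q (indicator {(v, x)}) (indicator {at_path Q (src_vertex Q (v, x)) y}) r
    = indicator {(v, x @ y)} r"
  proof (cases "valid_path Q r")
    case False
    then show ?thesis using assms by (auto simp: pmult_def indicator_def)
  next
    case True
    have factor_iff: "(u, take j z) = (v, x) \<and>
        at_path Q (src_vertex Q (u, take j z)) (drop j z) = at_path Q (src_vertex Q (v, x)) y
      \<longleftrightarrow> r = (v, x @ y) \<and> j = length x" if "j \<le> length z" for j
      using that by (auto simp: r) (metis append_take_drop_id snd_at_path)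
    have "pmult Q (indicator {(v, x)}) (indicator {at_path Q (src_vertex Q (v, x)) y}) r
        = (\<Sum>j \<in> {0..length z}. indicator {(v, x)} (u, take j z) *
            indicator {at_path Q (src_vertex Q (v, x)) y} (at_path Q (src_vertex Q (u, take j z)) (drop j z)))"
      using True by (simp add: r pmult_def at_path_take at_path_src_vertex_drop)
    also have "\<dots> = (\<Sum>j \<in> {0..length z}. if r = (v, x @ y) \<and> j = length x then 1 else 0)"
      using factor_iff by (intro sum.cong) (auto simp: indicator_def)
    also have "\<dots> = indicator {(v, x @ y)} r"
      by (auto simp: r indicator_def)
    finally show ?thesis .
  qed
qed

lemma indicator_palg: "valid_path Q p \<Longrightarrow> indicator {p} \<in> palg Q"
  by (auto simp: palg_def indicator_def)

lemma pmult_smult_left: "pmult Q (\<lambda>p. c * u p) v = (\<lambda>p. c * pmult Q u v p)"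
  by (simp add: fun_eq_iff pmult_def sum_distrib_left mult.assoc)

lemma ideal_gen_smult: "x \<in> ideal_gen Q G \<Longrightarrow> (\<lambda>p. c * x p) \<in> ideal_gen Q G"
proof (induction rule: ideal_gen.induct)
  case zero
  then show ?case by (simp add: ideal_gen.zero)
next
  case (gen g u v)
  moreover have "(\<lambda>p. c * u p) \<in> palg Q" using gen by (simp add: palg_def)
  ultimately show ?case
    using ideal_gen.gen[of g G "\<lambda>p. c * u p" Q v] by (simp add: pmult_smult_left)
next
  case (add x y)
  then show ?case using ideal_gen.add by (simp add: distrib_left)
qed

lemma ideal_gen_sum:
  "finite P \<Longrightarrow> (\<And>p. p \<in> P \<Longrightarrow> f p \<in> ideal_gen Q G) \<Longrightarrow>
    (\<lambda>r. \<Sum>p \<in> P. f p r) \<in> ideal_gen Q G"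
proof (induction P rule: finite_induct)
  case empty
  then show ?case by (simp add: ideal_gen.zero)
next
  case (insert p P)
  then show ?case using ideal_gen.add[of "f p" Q G] by simp
qed

lemma indicator_mem_ideal_gen:
  assumes wf: "wf_quiver Q" and p: "valid_path Q (v, x @ a # y)"
    and a: "indicator {(tgt Q a, [a])} \<in> G"
  shows "indicator {(v, x @ a # y)} \<in> ideal_gen Q G"
proof -
  have "pmult Q (indicator {(v, x)}) (indicator {(tgt Q a, [a])}) = indicator {(v, x @ [a])}"
    using pmult_indicator_append[of Q v x "[a]"] valid_path_append_left[of Q v "x @ [a]" y] p
    by (simp add: at_path_def)
  moreover have "pmult Q (indicator {(v, x @ [a])}) (indicator {at_path Q (src Q a) y}) =
      indicator {(v, x @ a # y)}"
    using pmult_indicator_append[of Q v "x @ [a]" y] p by (simp add: src_vertex_def)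
  moreover have "indicator {(v, x)} \<in> palg Q" "indicator {at_path Q (src Q a) y} \<in> palg Q"
    using p valid_path_append_left[of Q v x "a # y"] valid_path_append_right[OF wf, of v "x @ [a]" y]
    by (auto simp: indicator_palg src_vertex_def)
  ultimately show ?thesis
    using ideal_gen.gen[OF a] by metis
qed

lemma finite_paths_length_le:
  "wf_quiver Q \<Longrightarrow> finite {p. valid_path Q p \<and> length (snd p) \<le> d}"
proof (rule finite_subset)
  show "{p. valid_path Q p \<and> length (snd p) \<le> d} \<subseteq> verts Q \<times> {w. set w \<subseteq> arrs Q \<and> length w \<le> d}"
    by (auto simp: valid_path_def)
  show "wf_quiver Q \<Longrightarrow> finite (verts Q \<times> {w. set w \<subseteq> arrs Q \<and> length w \<le> d})"
    by (intro finite_cartesian_product finite_lists_length_le) (simp_all add: wf_quiver_def)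
qed

text \<open>Truncated at length \<open>d\<close>, \<open>z\<close> is a finite combination of paths through arrows of \<open>X\<close>,
  each of which factors through a generator.\<close>

lemma mem_madic_closure_ideal_gen:
  assumes wf: "wf_quiver Q"
    and gens: "\<And>a. a \<in> X \<Longrightarrow> indicator {(tgt Q a, [a])} \<in> G"
    and z: "z \<in> palg Q"
    and vanish: "\<And>p. valid_path Q p \<Longrightarrow> set (snd p) \<inter> X = {} \<Longrightarrow> z p = 0"
  shows "z \<in> madic_closure Q (ideal_gen Q G)"
  unfolding madic_closure_def
proof (intro CollectI conjI z allI)
  fix d
  define P where "P = {p. valid_path Q p \<and> length (snd p) \<le> d \<and> set (snd p) \<inter> X \<noteq> {}}"
  have "finite P"
    using finite_paths_length_le[OF wf, of d] by (rule finite_subset[rotated]) (auto simp: P_def)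
  define g where "g = (\<lambda>r. \<Sum>p \<in> P. z p * indicator {p} r)"
  have "g \<in> ideal_gen Q G"
    unfolding g_def
  proof (rule ideal_gen_sum[OF \<open>finite P\<close>])
    fix p assume "p \<in> P"
    then obtain a where a: "a \<in> set (snd p)" "a \<in> X" and "valid_path Q p"
      by (auto simp: P_def)
    moreover obtain x y where "p = (fst p, x @ a # y)"
      using split_list[OF a(1)] by (metis prod.collapse)
    ultimately show "(\<lambda>r. z p * indicator {p} r) \<in> ideal_gen Q G"
      by (metis indicator_mem_ideal_gen ideal_gen_smult wf gens)
  qed
  moreover have "z p = g p" if "valid_path Q p" "length (snd p) \<le> d" for p
  proof -
    have "g p = (if p \<in> P then z p else 0)"
      using \<open>finite P\<close> by (simp add: g_def indicator_def of_bool_def if_distrib sum.delta cong: if_cong)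
    then show ?thesis
      using that vanish[of p] by (auto simp: P_def)
  qed
  ultimately show "\<exists>g \<in> ideal_gen Q G. \<forall>p. valid_path Q p \<and> length (snd p) \<le> d \<longrightarrow> z p = g p"
    by blast
qed

section \<open>The Jacobian algebra of \<open>(A, S) \<oplus> (C, T)\<close>\<close>

lemma emb_r_indicator: "emb_r (indicator {(v, w)}) = indicator {(v, map Inr w)}"
  by (auto simp: fun_eq_iff emb_r_def indicator_def subset_range_Inr_iff comp_def)

lemma emb_l_mem_jacobian_ideal_iff:
  fixes QA :: "('v, 'a) quiver" and QC :: "('v, 'c) quiver"
    and S :: "'v \<times> 'a list \<Rightarrow> 'k::field" and T :: "'v \<times> 'c list \<Rightarrow> 'k"
  assumes fin: "finite (arrs QA)" "finite (arrs QC)" and verts: "verts QC = verts QA"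
    and T: "T \<in> homog QC 2"
  shows "emb_l x \<in> jacobian_ideal (qsum QA QC) (\<lambda>p. emb_l S p + emb_r T p) \<longleftrightarrow> x \<in> jacobian_ideal QA S"
proof
  have "proj_l (cyc_deriv (qsum QA QC) \<xi> (\<lambda>p. emb_l S p + emb_r T p))
      = cyc_deriv QA (\<xi> \<circ> Inl) S" for \<xi>
    using cyc_deriv_Nil_eq_0[OF T]
    by (simp add: cyc_deriv_qsum_potential[OF fin verts] proj_l_add proj_l_emb_r)
  then have proj_image:
      "proj_l ` jacobian_ideal (qsum QA QC) (\<lambda>p. emb_l S p + emb_r T p) \<subseteq> jacobian_ideal QA S"
    by (intro jacobian_ideal_image[OF continuous_palg_hom_proj_l]) blast
  show "x \<in> jacobian_ideal QA S" if "emb_l x \<in> jacobian_ideal (qsum QA QC) (\<lambda>p. emb_l S p + emb_r T p)"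
    using subsetD[OF proj_image imageI[OF that]] by simp
next
  have "emb_l (cyc_deriv QA \<xi> S)
      = cyc_deriv (qsum QA QC) (case_sum \<xi> (\<lambda>_. 0)) (\<lambda>p. emb_l S p + emb_r T p)" for \<xi>
    by (simp add: cyc_deriv_qsum_potential[OF fin verts] comp_def cyc_deriv_zero_left)
  then have emb_image:
      "emb_l ` jacobian_ideal QA S \<subseteq> jacobian_ideal (qsum QA QC) (\<lambda>p. emb_l S p + emb_r T p)"
    by (intro jacobian_ideal_image[OF continuous_palg_hom_emb_l]) blast
  show "emb_l x \<in> jacobian_ideal (qsum QA QC) (\<lambda>p. emb_l S p + emb_r T p)" if "x \<in> jacobian_ideal QA S"
    using subsetD[OF emb_image imageI[OF that]] .
qed

lemma diff_emb_l_proj_l_mem_jacobian_ideal: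
  fixes QA :: "('v, 'a) quiver" and QC :: "('v, 'c) quiver"
    and S :: "'v \<times> 'a list \<Rightarrow> 'k::field" and T :: "'v \<times> 'c list \<Rightarrow> 'k"
  assumes wfA: "wf_quiver QA" and wfC: "wf_quiver QC" and verts: "verts QC = verts QA"
    and triv: "homog QC 1 \<subseteq> {cyc_deriv QC \<xi> T | \<xi>. True}"
    and y: "y \<in> palg (qsum QA QC)"
  shows "(\<lambda>p. y p - emb_l (proj_l y) p) \<in> jacobian_ideal (qsum QA QC) (\<lambda>p. emb_l S p + emb_r T p)"
  unfolding jacobian_ideal_def
proof (rule mem_madic_closure_ideal_gen[where X = "Inr ` arrs QC"])
  have fin: "finite (arrs QA)" "finite (arrs QC)"
    using wfA wfC by (simp_all add: wf_quiver_def)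
  show "wf_quiver (qsum QA QC)"
    using wfA wfC verts by (rule wf_quiver_qsum)
  show "(\<lambda>p. y p - emb_l (proj_l y) p) \<in> palg (qsum QA QC)"
    using y emb_l_palg[OF proj_l_palg[OF y], of QC] by (simp add: palg_def)
  fix a :: "'a + 'c" assume "a \<in> Inr ` arrs QC"
  then obtain c where a: "a = Inr c" and c: "c \<in> arrs QC" by blast
  have "valid_path QC (tgt QC c, [c])"
    using c wfC by (auto simp: valid_path_def composable_def wf_quiver_def)
  then have "indicator {(tgt QC c, [c])} \<in> homog QC 1"
    by (auto simp: homog_def indicator_palg indicator_def)
  then have "indicator {(tgt QC c, [c])} \<in> {cyc_deriv QC \<xi> T | \<xi>. True}"
    using triv by (rule subsetD[rotated])
  then obtain \<eta> where \<eta>: "cyc_deriv QC \<eta> T = indicator {(tgt QC c, [c])}"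
    by auto
  have comp: "case_sum (\<lambda>_. 0) \<eta> \<circ> Inl = (\<lambda>_. 0)" "case_sum (\<lambda>_. 0) \<eta> \<circ> Inr = \<eta>"
    by auto
  have "cyc_deriv (qsum QA QC) (case_sum (\<lambda>_. 0) \<eta>) (\<lambda>p. emb_l S p + emb_r T p)
      = indicator {(tgt QC c, [Inr c])}"
    unfolding cyc_deriv_qsum_potential[OF fin verts] comp \<eta> cyc_deriv_zero_left emb_r_indicator by simp
  then show "indicator {(tgt (qsum QA QC) a, [a])}
      \<in> {cyc_deriv (qsum QA QC) \<xi> (\<lambda>p. emb_l S p + emb_r T p) | \<xi>. True}"
    unfolding a by (metis (mono_tags, lifting) mem_Collect_eq qsum_simps(6))
next
  fix p assume "valid_path (qsum QA QC) p" and "set (snd p) \<inter> Inr ` arrs QC = {}"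
  then have "set (snd p) \<subseteq> range Inl"
    unfolding valid_path_def qsum_simps by blast
  then show "y p - emb_l (proj_l y) p = 0"
    by (simp add: emb_l_proj_l)
qed

theorem proposition4p5:
  fixes QA :: "('v, 'a) quiver" and QC :: "('v, 'c) quiver"
    and S :: "'v \<times> 'a list \<Rightarrow> 'k::field" and T :: "'v \<times> 'c list \<Rightarrow> 'k"
  assumes "verts QC = verts QA"
    and "is_QP QA S"
    and "trivial_QP QC T"
  shows "(\<forall>x \<in> palg QA. (emb_l (x :: 'v \<times> 'a list \<Rightarrow> 'k) :: 'v \<times> ('a + 'c) list \<Rightarrow> 'k) \<in> palg (qsum QA QC))
    \<and> (emb_l (pone QA :: 'v \<times> 'a list \<Rightarrow> 'k) :: 'v \<times> ('a + 'c) list \<Rightarrow> 'k) = pone (qsum QA QC)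
    \<and> (\<forall>(x :: 'v \<times> 'a list \<Rightarrow> 'k) \<in> palg QA. \<forall>y \<in> palg QA.
          emb_l (pmult QA x y) = pmult (qsum QA QC) (emb_l x) (emb_l y)
        \<and> (emb_l (\<lambda>p. x p + y p) :: 'v \<times> ('a + 'c) list \<Rightarrow> 'k) = (\<lambda>p. emb_l x p + emb_l y p))
    \<and> (\<forall>c. \<forall>(x :: 'v \<times> 'a list \<Rightarrow> 'k) \<in> palg QA. (emb_l (\<lambda>p. c * x p) :: 'v \<times> ('a + 'c) list \<Rightarrow> 'k) = (\<lambda>p. c * emb_l x p))
    \<and> (\<forall>x \<in> palg QA. emb_l x \<in> jacobian_ideal (qsum QA QC) (\<lambda>p. emb_l S p + emb_r T p)
          \<longleftrightarrow> x \<in> jacobian_ideal QA S)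
    \<and> (\<forall>y \<in> palg (qsum QA QC). \<exists>x \<in> palg QA.
          (\<lambda>p. y p - emb_l x p) \<in> jacobian_ideal (qsum QA QC) (\<lambda>p. emb_l S p + emb_r T p))"
proof -
  have wfA: "wf_quiver QA"
    using assms(2) by (simp add: is_QP_def)
  have wfC: "wf_quiver QC" and T: "T \<in> homog QC 2" and triv: "homog QC 1 \<subseteq> {cyc_deriv QC \<xi> T | \<xi>. True}"
    using assms(3) by (simp_all add: trivial_QP_def is_QP_def)
  have fin: "finite (arrs QA)" "finite (arrs QC)"
    using wfA wfC by (simp_all add: wf_quiver_def)
  show ?thesis
  proof (intro conjI ballI allI)
    fix y :: "'v \<times> ('a + 'c) list \<Rightarrow> 'k"
    assume "y \<in> palg (qsum QA QC)"
    then show "\<exists>x \<in> palg QA.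
        (\<lambda>p. y p - emb_l x p) \<in> jacobian_ideal (qsum QA QC) (\<lambda>p. emb_l S p + emb_r T p)"
      using diff_emb_l_proj_l_mem_jacobian_ideal[OF wfA wfC assms(1) triv] proj_l_palg by blast
  qed (simp_all add: emb_l_palg emb_l_pone emb_l_pmult emb_l_add emb_l_smult
      emb_l_mem_jacobian_ideal_iff[OF fin assms(1) T])
qed

end
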